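(* Assume the setting and assumptions (A1)–(A5) described in the context, so that the closure of $A$ generates a conservative Markov semigroup $\{T(t)\}_{t\ge0}$ in $C(\bar L)$ with $\|T_n^{[\varepsilon_n^{-1}t]}\pi_n(f)-\pi_n(T(t)f)\|_n\to0$ for all $f\in C(\bar L)$, and let $X(t)$ be the Markov process in $\bar L$ with transition semigroup $\{T(t)\}$. Assume additionally that the push-forward measures $\iota_n(M_n)$ converge weakly to a probability measure $P$ on $\bar L$. Then $P$ is an invariant distribution for $X(t)$, i.e. $\int_{\bar L}T(t)f\,dP=\int_{\bar L}f\,dP$ for all $f\in C(\bar L)$ and $t\ge0$.
   Context: $L=\bigsqcup_{n\ge0}L_n$ is a graded set with $L_0$ a singleton and each $L_n$ finite; $p^\downarrow:L\times L\to[0,\infty)$ vanishes unless $|\lambda|=|\mu|+1$ and $\sum_{\mu\in L_{|\lambda|-1}}p^\downarrow(\lambda,\mu)=1$ for $|\lambda|\ge1$. $\{M_n\}$ is a coherent system (probability measures on $L_n$ with $\sum_{\lambda\in L_n}M_n(\lambda)p^\downarrow(\lambda,\mu)=M_{n-1}(\mu)$) with $M_n(\lambda)>0$ everywhere; $p^\uparrow(\lambda,\nu)=\frac{M_{n+1}(\nu)}{M_n(\lambda)}p^\downarrow(\nu,\lambda)$; $(T_ng)(\lambda)=\sum_{\nu\in L_{n+1}}p^\uparrow(\lambda,\nu)\sum_{\tilde\lambda\in L_n}p^\downarrow(\nu,\tilde\lambda)g(\tilde\lambda)$ on real functions on $L_n$ (norm $\|g\|_n=\sup|g|$). $\bar L$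 is a topological space, $\iota_n:L_n\to\bar L$ injective, $\pi_n:C(\bar L)\to C(L_n)$, $(\pi_nf)(\lambda)=f(\iota_n(\lambda))$. Assumptions: (A1) $\bar L$ compact metrizable separable; (A2) every nonempty open set meets $\iota_n(L_n)$ for all large $n$; (A3) there is a dense subspace $\mathcal F\subset C(\bar L)$ with an exhaustive ascending sequence of finite-dimensional subspaces $\mathcal F^m$ such that for each $m$ and all large $n$, $\pi_n$ is injective on $\mathcal F^m$ and $\pi_n(\mathcal F^m)$ is $T_n$-invariant; (A4) there are $\varepsilon_n>0$, $\varepsilon_n\to0$, such that for $f\in\mathcal F^m$ the elements $g_n\in\mathcal F^m$ with $\pi_n(g_n)=\varepsilon_n^{-1}(T_n-\mathbf 1)\pi_n f$ converge in $\mathcal F^m$ to a limit $Af$; (A5) $1\in\mathcal F$. *)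

theory Defs
  imports "HOL-Probability.Probability"
begin

text \<open>The graded set L is a union of levels Lv n :: 'l set; functions on L_n are
  represented as real functions on 'l whose values outside Lv n are irrelevant.\<close>

definition pup :: "(nat \<Rightarrow> 'l \<Rightarrow> real) \<Rightarrow> ('l \<Rightarrow> 'l \<Rightarrow> real) \<Rightarrow> nat \<Rightarrow> 'l \<Rightarrow> 'l \<Rightarrow> real" where
  "pup M pd n lam nu = M (Suc n) nu / M n lam * pd nu lam"

definition Tn :: "(nat \<Rightarrow> 'l set) \<Rightarrow> (nat \<Rightarrow> 'l \<Rightarrow> real) \<Rightarrow> ('l \<Rightarrow> 'l \<Rightarrow> real)
                  \<Rightarrow> nat \<Rightarrow> ('l \<Rightarrow> real) \<Rightarrow> 'l \<Rightarrow> real" where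
  "Tn Lv M pd n g lam =
     (\<Sum>nu\<in>Lv (Suc n). pup M pd n lam nu * (\<Sum>lam'\<in>Lv n. pd nu lam' * g lam'))"

definition pin :: "(nat \<Rightarrow> 'l set) \<Rightarrow> (nat \<Rightarrow> 'l \<Rightarrow> 'b) \<Rightarrow> nat \<Rightarrow> ('b \<Rightarrow> real) \<Rightarrow> 'l \<Rightarrow> real" where
  "pin Lv iota n f = (\<lambda>lam. if lam \<in> Lv n then f (iota n lam) else 0)"

definition supn :: "(nat \<Rightarrow> 'l set) \<Rightarrow> nat \<Rightarrow> ('l \<Rightarrow> real) \<Rightarrow> real" where
  "supn Lv n g = Sup ((\<lambda>lam. \<bar>g lam\<bar>) ` Lv n)"

definition supnorm :: "('b \<Rightarrow> real) \<Rightarrow> real" where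
  "supnorm f = (SUP x. \<bar>f x\<bar>)"

definition fin_span :: "('b \<Rightarrow> real) set \<Rightarrow> ('b \<Rightarrow> real) set" where
  "fin_span B = {(\<lambda>x. \<Sum>b\<in>B. c b * b x) | c. True}"

definition is_subspace_fun :: "('b \<Rightarrow> real) set \<Rightarrow> bool" where
  "is_subspace_fun F \<longleftrightarrow> (\<lambda>x. 0) \<in> F \<and> (\<forall>f\<in>F. \<forall>g\<in>F. (\<lambda>x. f x + g x) \<in> F)
      \<and> (\<forall>c. \<forall>f\<in>F. (\<lambda>x. c * f x) \<in> F)"

definition pushfwd_weak_conv ::
  "(nat \<Rightarrow> 'l set) \<Rightarrow> (nat \<Rightarrow> 'l \<Rightarrow> 'b::topological_space) \<Rightarrow> (nat \<Rightarrow> 'l \<Rightarrow> real) \<Rightarrow> 'b measure \<Rightarrow> bool" where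
  "pushfwd_weak_conv Lv iota M P \<longleftrightarrow>
     (\<forall>f::'b \<Rightarrow> real. continuous_on UNIV f \<longrightarrow>
        (\<lambda>n. \<Sum>lam\<in>Lv n. M n lam * f (iota n lam)) \<longlonglongrightarrow> integral\<^sup>L P f)"

end

theory Submission
  imports Defs
begin

text \<open>Coherence says exactly that \<open>M\<^sub>n\<close> is invariant for the up-down chain \<open>T\<^sub>n\<close>, hence for
  all its powers. Pairing \<open>f\<close> with \<open>M\<^sub>n\<close> before and after \<open>\<lfloor>t/\<epsilon>\<^sub>n\<rfloor>\<close> steps gives equal
  values; by the approximation property the latter is uniformly close to pairing
  \<open>T(t) f\<close> with \<open>M\<^sub>n\<close>. Letting \<open>n \<rightarrow> \<infinity>\<close> and using weak convergence of \<open>\<iota>\<^sub>n(M\<^sub>n)\<close> to \<open>P\<close>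
  yields \<open>\<integral> T(t) f dP = \<integral> f dP\<close>.\<close>

lemma Tn_preserves_coherent_mean:
  fixes Lv :: "nat \<Rightarrow> 'l set" and M :: "nat \<Rightarrow> 'l \<Rightarrow> real" and pd :: "'l \<Rightarrow> 'l \<Rightarrow> real"
  assumes fin: "finite (Lv n)" "finite (Lv (Suc n))"
    and pd_sum: "\<And>nu. nu \<in> Lv (Suc n) \<Longrightarrow> (\<Sum>mu\<in>Lv n. pd nu mu) = 1"
    and M_nonzero: "\<And>lam. lam \<in> Lv n \<Longrightarrow> M n lam \<noteq> 0"
    and M_coherent: "\<And>mu. mu \<in> Lv n \<Longrightarrow> (\<Sum>nu\<in>Lv (Suc n). M (Suc n) nu * pd nu mu) = M n mu"
  shows "(\<Sum>lam\<in>Lv n. M n lam * Tn Lv M pd n g lam) = (\<Sum>lam\<in>Lv n. M n lam * g lam)"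
proof -
  define down where "down nu = (\<Sum>lam'\<in>Lv n. pd nu lam' * g lam')" for nu
  have "(\<Sum>lam\<in>Lv n. M n lam * Tn Lv M pd n g lam)
      = (\<Sum>lam\<in>Lv n. \<Sum>nu\<in>Lv (Suc n). M (Suc n) nu * pd nu lam * down nu)"
    using M_nonzero
    by (intro sum.cong refl) (simp add: Tn_def pup_def down_def sum_distrib_left)
  also have "\<dots> = (\<Sum>nu\<in>Lv (Suc n). M (Suc n) nu * down nu * (\<Sum>lam\<in>Lv n. pd nu lam))"
    by (subst sum.swap) (simp add: sum_distrib_left mult_ac)
  also have "\<dots> = (\<Sum>nu\<in>Lv (Suc n). \<Sum>lam\<in>Lv n. M (Suc n) nu * pd nu lam * g lam)"
    using pd_sum by (intro sum.cong refl) (simp add: down_def sum_distrib_left mult_ac)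
  also have "\<dots> = (\<Sum>lam\<in>Lv n. (\<Sum>nu\<in>Lv (Suc n). M (Suc n) nu * pd nu lam) * g lam)"
    by (subst sum.swap) (simp add: sum_distrib_right)
  also have "\<dots> = (\<Sum>lam\<in>Lv n. M n lam * g lam)"
    using M_coherent by simp
  finally show ?thesis .
qed

lemma Tn_power_preserves_coherent_mean:
  fixes Lv :: "nat \<Rightarrow> 'l set" and M :: "nat \<Rightarrow> 'l \<Rightarrow> real" and pd :: "'l \<Rightarrow> 'l \<Rightarrow> real"
  assumes "finite (Lv n)" "finite (Lv (Suc n))"
    and "\<And>nu. nu \<in> Lv (Suc n) \<Longrightarrow> (\<Sum>mu\<in>Lv n. pd nu mu) = 1"
    and "\<And>lam. lam \<in> Lv n \<Longrightarrow> M n lam \<noteq> 0"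
    and "\<And>mu. mu \<in> Lv n \<Longrightarrow> (\<Sum>nu\<in>Lv (Suc n). M (Suc n) nu * pd nu mu) = M n mu"
  shows "(\<Sum>lam\<in>Lv n. M n lam * (Tn Lv M pd n ^^ k) g lam) = (\<Sum>lam\<in>Lv n. M n lam * g lam)"
proof (induction k)
  case (Suc k)
  then show ?case
    using Tn_preserves_coherent_mean[OF assms, of "(Tn Lv M pd n ^^ k) g"] by simp
qed simp

lemma abs_convex_combination_le_Sup:
  fixes w a :: "'a \<Rightarrow> real"
  assumes "finite A" "\<And>x. x \<in> A \<Longrightarrow> w x \<ge> 0" "(\<Sum>x\<in>A. w x) = 1"
  shows "\<bar>\<Sum>x\<in>A. w x * a x\<bar> \<le> Sup ((\<lambda>x. \<bar>a x\<bar>) ` A)"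
proof -
  have a_le_Sup: "\<bar>a x\<bar> \<le> Sup ((\<lambda>x. \<bar>a x\<bar>) ` A)" if "x \<in> A" for x
    using assms(1) that by (intro cSup_upper bdd_above_finite) auto
  have "\<bar>\<Sum>x\<in>A. w x * a x\<bar> \<le> (\<Sum>x\<in>A. w x * \<bar>a x\<bar>)"
    using sum_abs[of "\<lambda>x. w x * a x" A] assms(2) by (simp add: abs_mult)
  also have "\<dots> \<le> (\<Sum>x\<in>A. w x) * Sup ((\<lambda>x. \<bar>a x\<bar>) ` A)"
    unfolding sum_distrib_right using assms(2) a_le_Sup by (intro sum_mono mult_left_mono)
  finally show ?thesis using assms(3) by simp
qed

lemma pushfwd_weak_conv_pin:
  assumes "pushfwd_weak_conv Lv iota M P" "continuous_on UNIV h"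
  shows "(\<lambda>n. \<Sum>lam\<in>Lv n. M n lam * pin Lv iota n h lam) \<longlonglongrightarrow> integral\<^sup>L P h"
proof -
  have "(\<Sum>lam\<in>Lv n. M n lam * pin Lv iota n h lam) = (\<Sum>lam\<in>Lv n. M n lam * h (iota n lam))" for n
    by (intro sum.cong refl) (simp add: pin_def)
  then show ?thesis using assms unfolding pushfwd_weak_conv_def by simp
qed

theorem proposition1p6:
  fixes Lv :: "nat \<Rightarrow> 'l set"
    and pd :: "'l \<Rightarrow> 'l \<Rightarrow> real"
    and M :: "nat \<Rightarrow> 'l \<Rightarrow> real"
    and iota :: "nat \<Rightarrow> 'l \<Rightarrow> 'b::metric_space"
    and F :: "('b \<Rightarrow> real) set"
    and Fm :: "nat \<Rightarrow> ('b \<Rightarrow> real) set"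
    and eps :: "nat \<Rightarrow> real"
    and T :: "real \<Rightarrow> ('b \<Rightarrow> real) \<Rightarrow> ('b \<Rightarrow> real)"
    and P :: "'b measure"
  \<comment> \<open>graded set, down transition function, coherent system\<close>
  assumes Ln_finite: "\<And>n. finite (Lv n)"
    and Ln0: "\<exists>r. Lv 0 = {r}"
    and Ln_disj: "\<And>n m. n \<noteq> m \<Longrightarrow> Lv n \<inter> Lv m = {}"
    and pd_nonneg: "\<And>lam mu. pd lam mu \<ge> 0"
    and pd_support: "\<And>lam mu. pd lam mu \<noteq> 0 \<Longrightarrow> \<exists>n. lam \<in> Lv (Suc n) \<and> mu \<in> Lv n"
    and pd_sum: "\<And>n lam. lam \<in> Lv (Suc n) \<Longrightarrow> (\<Sum>mu\<in>Lv n. pd lam mu) = 1"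
    and M_pos: "\<And>n lam. lam \<in> Lv n \<Longrightarrow> M n lam > 0"
    and M_sum: "\<And>n. (\<Sum>lam\<in>Lv n. M n lam) = 1"
    and M_coherent: "\<And>n mu. mu \<in> Lv n \<Longrightarrow> (\<Sum>lam\<in>Lv (Suc n). M (Suc n) lam * pd lam mu) = M n mu"
  \<comment> \<open>embeddings\<close>
    and iota_inj: "\<And>n. inj_on (iota n) (Lv n)"
  \<comment> \<open>(A1) Lbar compact metrizable (hence separable)\<close>
    and A1: "compact (UNIV :: 'b set)"
  \<comment> \<open>(A2)\<close>
    and A2: "\<And>U. open U \<Longrightarrow> U \<noteq> {} \<Longrightarrow> \<exists>N. \<forall>n\<ge>N. \<exists>lam\<in>Lv n. iota n lam \<in> U"
  \<comment> \<open>(A3)\<close>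
    and F_cont: "\<And>f. f \<in> F \<Longrightarrow> continuous_on UNIV f"
    and F_subspace: "is_subspace_fun F"
    and F_dense: "\<And>f e. continuous_on UNIV f \<Longrightarrow> e > 0 \<Longrightarrow> \<exists>g\<in>F. \<forall>x. \<bar>f x - g x\<bar> < e"
    and Fm_findim: "\<And>m. \<exists>B. finite B \<and> Fm m = fin_span B"
    and Fm_mono: "\<And>m. Fm m \<subseteq> Fm (Suc m)"
    and Fm_exhaust: "(\<Union>m. Fm m) = F"
    and A3: "\<And>m. \<exists>N. \<forall>n\<ge>N. inj_on (pin Lv iota n) (Fm m) \<and>
                 (\<forall>f\<in>Fm m. \<exists>g\<in>Fm m. (\<forall>lam\<in>Lv n. Tn Lv M pd n (pin Lv iota n f) lam = pin Lv iota n g lam))"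
  \<comment> \<open>(A4)\<close>
    and eps_pos: "\<And>n. eps n > 0"
    and eps_lim: "eps \<longlonglongrightarrow> 0"
    and A4: "\<And>m f. f \<in> Fm m \<Longrightarrow> \<exists>Af\<in>Fm m. \<forall>g :: nat \<Rightarrow> 'b \<Rightarrow> real.
               (\<forall>\<^sub>F n in sequentially. g n \<in> Fm m \<and>
                   pin Lv iota n (g n) =
                   (\<lambda>lam. if lam \<in> Lv n then
                       (Tn Lv M pd n (pin Lv iota n f) lam - pin Lv iota n f lam) / eps n else 0))
               \<longrightarrow> (\<lambda>n. supnorm (\<lambda>x. g n x - Af x)) \<longlonglongrightarrow> 0"
  \<comment> \<open>(A5)\<close>
    and A5: "(\<lambda>x. 1) \<in> F"
  \<comment> \<open>the conservative Markov semigroup T(t) on C(Lbar) obtained from A, characterised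
      by the approximation property\<close>
    and T_cont: "\<And>t f. t \<ge> 0 \<Longrightarrow> continuous_on UNIV f \<Longrightarrow> continuous_on UNIV (T t f)"
    and T_zero: "\<And>f. continuous_on UNIV f \<Longrightarrow> T 0 f = f"
    and T_semigroup: "\<And>s t f. s \<ge> 0 \<Longrightarrow> t \<ge> 0 \<Longrightarrow> continuous_on UNIV f \<Longrightarrow>
                        T (s + t) f = T s (T t f)"
    and T_linear: "\<And>t a b f g. t \<ge> 0 \<Longrightarrow> continuous_on UNIV f \<Longrightarrow> continuous_on UNIV g \<Longrightarrow>
                        T t (\<lambda>x. a * f x + b * g x) = (\<lambda>x. a * T t f x + b * T t g x)"
    and T_positive: "\<And>t f x. t \<ge> 0 \<Longrightarrow> continuous_on UNIV f \<Longrightarrow> (\<forall>y. f y \<ge> 0) \<Longrightarrow> T t f x \<ge> 0"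
    and T_conservative: "\<And>t. t \<ge> 0 \<Longrightarrow> T t (\<lambda>x. 1) = (\<lambda>x. 1)"
    and T_strongcont: "\<And>f t. t \<ge> 0 \<Longrightarrow> continuous_on UNIV f \<Longrightarrow>
                        ((\<lambda>s. supnorm (\<lambda>x. T s f x - T t f x)) \<longlongrightarrow> 0) (at t within {0..})"
    and T_approx: "\<And>f t. t \<ge> 0 \<Longrightarrow> continuous_on UNIV f \<Longrightarrow>
          (\<lambda>n. supn Lv n (\<lambda>lam. (Tn Lv M pd n ^^ nat \<lfloor>t / eps n\<rfloor>) (pin Lv iota n f) lam
                                  - pin Lv iota n (T t f) lam)) \<longlonglongrightarrow> 0"
  \<comment> \<open>weak convergence of iota_n(M_n) to a probability measure P\<close>
    and P_prob: "prob_space P"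
    and P_sets: "sets P = sets borel"
    and P_weak: "pushfwd_weak_conv Lv iota M P"
  shows "\<forall>f t. continuous_on UNIV f \<longrightarrow> t \<ge> 0 \<longrightarrow>
           integral\<^sup>L P (T t f) = integral\<^sup>L P f"
proof (intro allI impI)
  fix f :: "'b \<Rightarrow> real" and t :: real
  assume f_cont: "continuous_on UNIV f" and t: "t \<ge> 0"
  define Tpow where "Tpow n = Tn Lv M pd n ^^ nat \<lfloor>t / eps n\<rfloor>" for n
  define mean where "mean n g = (\<Sum>lam\<in>Lv n. M n lam * g lam)" for n g
  have M_nonzero: "M n lam \<noteq> 0" if "lam \<in> Lv n" for n lam
    using M_pos[OF that] by simp
  have "mean n (Tpow n (pin Lv iota n f)) = mean n (pin Lv iota n f)" for n
    unfolding mean_def Tpow_def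
    by (rule Tn_power_preserves_coherent_mean[of Lv n pd M])
      (simp_all add: Ln_finite pd_sum M_nonzero M_coherent)
  then have mean_Tpow: "(\<lambda>n. mean n (Tpow n (pin Lv iota n f))) \<longlonglongrightarrow> integral\<^sup>L P f"
    using pushfwd_weak_conv_pin[OF P_weak f_cont] by (simp add: mean_def)
  have "\<bar>mean n (Tpow n (pin Lv iota n f)) - mean n (pin Lv iota n (T t f))\<bar>
        \<le> supn Lv n (\<lambda>lam. Tpow n (pin Lv iota n f) lam - pin Lv iota n (T t f) lam)" for n
  proof -
    have "mean n (Tpow n (pin Lv iota n f)) - mean n (pin Lv iota n (T t f))
          = (\<Sum>lam\<in>Lv n. M n lam * (Tpow n (pin Lv iota n f) lam - pin Lv iota n (T t f) lam))"
      by (simp add: mean_def sum_subtractf[symmetric] right_diff_distrib)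
    then show ?thesis
      unfolding supn_def
      by (simp only:) (rule abs_convex_combination_le_Sup[OF Ln_finite less_imp_le[OF M_pos] M_sum])
  qed
  then have "(\<lambda>n. mean n (Tpow n (pin Lv iota n f)) - mean n (pin Lv iota n (T t f))) \<longlonglongrightarrow> 0"
    by (intro Lim_null_comparison[OF _ T_approx[OF t f_cont, folded Tpow_def]]) simp
  with mean_Tpow have "(\<lambda>n. mean n (pin Lv iota n (T t f))) \<longlonglongrightarrow> integral\<^sup>L P f"
    by (rule Lim_transform2)
  moreover have "(\<lambda>n. mean n (pin Lv iota n (T t f))) \<longlonglongrightarrow> integral\<^sup>L P (T t f)"
    unfolding mean_def using pushfwd_weak_conv_pin[OF P_weak T_cont[OF t f_cont]] .
  ultimately show "integral\<^sup>L P (T t f) = integral\<^sup>L P f"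
    by (rule LIMSEQ_unique[rotated])
qed

end
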